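(* For every finite multiset of formulas $\Gamma$ and every formula $\varphi$: the sequent $\Gamma\Rightarrow\varphi$ is derivable in $\mathbf{G3N}$ (resp. $\mathbf{G3NeF}$, $\mathbf{G3CoPC}$, $\mathbf{G3MPC}$) if and only if the equation $\bigwedge\Gamma\to\varphi\approx 1$ is valid in the variety of N-algebras (resp. NeF-algebras, CoPC-algebras, contrapositionally complemented lattices).
   Context: Formulas are generated from a countable set of propositional variables $p,q,\dots$ and the constant $\top$ by the grammar $\varphi::= p\mid\top\mid\varphi\wedge\varphi\mid\varphi\vee\varphi\mid\varphi\to\varphi\mid\neg\varphi$ (there is no constant $\bot$). $\varphi\leftrightarrow\psi$ abbreviates $(\varphi\to\psi)\wedge(\psi\to\varphi)$. A sequent is an expression $\Gamma\Rightarrow\varphi$ where $\Gamma$ is a finite multiset of formulas and $\varphi$ is a formula (the goal); $\Gamma,\Delta$ denotes multiset union and $\Gamma,\alpha$ denotes $\Gamma$ with one more occurrence of $\alpha$. Rules ($p$ a propositional variable): (ax) $\Gamma,p\Rightarrow p$ (no premises); ($\top$) $\Gamma\Rightarrow\top$ (no premises); ($\to$r) from $\Gamma,\alpha\Rightarrow\beta$ infer $\Gamma\Rightarrow\alpha\to\beta$; ($\to$l) from $\Gamma,\alpha\to\beta\Rightarrow\alpha$ and $\Gamma,\beta\Rightarrow\varphi$ infer $\Gamma,\alpha\to\beta\Rightarrow\varphi$; ($\wedge$r) from $\Gamma\Rightarrow\alpha$ and $\Gamma\Rightarrow\beta$ infer $\Gamma\Rightarrow\alpha\wedge\beta$; ($\wedge$l)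 from $\Gamma,\alpha,\beta\Rightarrow\varphi$ infer $\Gamma,\alpha\wedge\beta\Rightarrow\varphi$; ($\vee$r$_1$), ($\vee$r$_2$) from $\Gamma\Rightarrow\alpha$ (resp. $\Gamma\Rightarrow\beta$) infer $\Gamma\Rightarrow\alpha\vee\beta$; ($\vee$l) from $\Gamma,\alpha\Rightarrow\varphi$ and $\Gamma,\beta\Rightarrow\varphi$ infer $\Gamma,\alpha\vee\beta\Rightarrow\varphi$; (n) from $\Gamma,\neg\alpha,\beta\Rightarrow\alpha$ and $\Gamma,\neg\alpha,\alpha\Rightarrow\beta$ infer $\Gamma,\neg\alpha\Rightarrow\neg\beta$; (nef) from $\Gamma,\neg\alpha\Rightarrow\alpha$ infer $\Gamma,\neg\alpha\Rightarrow\neg\beta$; (copc) from $\Gamma,\neg\alpha,\beta\Rightarrow\alpha$ infer $\Gamma,\neg\alpha\Rightarrow\neg\beta$; (an) from $\Gamma,\alpha\Rightarrow\neg\alpha$ infer $\Gamma\Rightarrow\neg\alpha$. The rules (ax) through ($\vee$l) are the positive rules. The four systems are: $\mathbf{G3N}$ = positive rules + (n); $\mathbf{G3NeF}$ = positive rules + (n) + (nef); $\mathbf{G3CoPC}$ = positive rules + (copc); $\mathbf{G3MPC}$ = positive rules + (copc) + (an). None of them contains weakening, contraction or cut as a rule. A derivation is a finite tree of rule instances with leaves instances of (ax) or ($\top$); its height is the number of inference steps on a longest branch. A sequent is derivable if it has a derivation; a formula $\varphi$ is a theorem if $\Rightarrow\varphi$ (empty antecedent) is derivable. Algebraic semantics: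 a relatively pseudo-complemented lattice (Brouwerian algebra) is an algebra $\langle A,\wedge,\vee,\to,1\rangle$ that is a lattice with top element $1$ such that $c\le a\to b$ iff $c\wedge a\le b$ for all $a,b,c$. An N-algebra is an algebra $\langle A,\wedge,\vee,\to,1,\neg\rangle$ whose reduct $\langle A,\wedge,\vee,\to,1\rangle$ is a relatively pseudo-complemented lattice and whose unary operation satisfies $(p\leftrightarrow q)\to(\neg p\leftrightarrow\neg q)\approx 1$. NeF-algebras are N-algebras satisfying $(p\wedge\neg p)\to\neg q\approx1$; CoPC-algebras are N-algebras satisfying $(p\to q)\to(\neg q\to\neg p)\approx 1$; contrapositionally complemented lattices are CoPC-algebras satisfying moreover $(p\to\neg p)\to\neg p\approx 1$. Formulas are interpreted as terms, with $\top$ interpreted as $1$; $\bigwedge\Gamma$ is the conjunction of the formulas in $\Gamma$ (equal to $\top$ if $\Gamma$ is empty). An equation is valid in a variety if it holds under every assignment of the variables in every algebra of the variety. *)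

theory Defs
  imports Main "HOL-Library.Multiset"
begin

datatype form =
    Var nat
  | Top
  | And form form
  | Or form form
  | Imp form form
  | Neg form

definition Iff :: "form \<Rightarrow> form \<Rightarrow> form" where
  "Iff a b = And (Imp a b) (Imp b a)"

datatype system = G3N | G3NeF | G3CoPC | G3MPC

definition has_n :: "system \<Rightarrow> bool" where
  "has_n S \<longleftrightarrow> S = G3N \<or> S = G3NeF"
definition has_nef :: "system \<Rightarrow> bool" where
  "has_nef S \<longleftrightarrow> S = G3NeF"
definition has_copc :: "system \<Rightarrow> bool" where
  "has_copc S \<longleftrightarrow> S = G3CoPC \<or> S = G3MPC"
definition has_an :: "system \<Rightarrow> bool" where
  "has_an S \<longleftrightarrow> S = G3MPC"

inductive derivable :: "system \<Rightarrow> form multiset \<Rightarrow> form \<Rightarrow> bool" for S where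
  ax:   "derivable S (add_mset (Var p) \<Gamma>) (Var p)"
| top:  "derivable S \<Gamma> Top"
| impR: "derivable S (add_mset a \<Gamma>) b \<Longrightarrow> derivable S \<Gamma> (Imp a b)"
| impL: "derivable S (add_mset (Imp a b) \<Gamma>) a \<Longrightarrow> derivable S (add_mset b \<Gamma>) \<phi>
          \<Longrightarrow> derivable S (add_mset (Imp a b) \<Gamma>) \<phi>"
| andR: "derivable S \<Gamma> a \<Longrightarrow> derivable S \<Gamma> b \<Longrightarrow> derivable S \<Gamma> (And a b)"
| andL: "derivable S (add_mset a (add_mset b \<Gamma>)) \<phi> \<Longrightarrow> derivable S (add_mset (And a b) \<Gamma>) \<phi>"
| orR1: "derivable S \<Gamma> a \<Longrightarrow> derivable S \<Gamma> (Or a b)"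
| orR2: "derivable S \<Gamma> b \<Longrightarrow> derivable S \<Gamma> (Or a b)"
| orL:  "derivable S (add_mset a \<Gamma>) \<phi> \<Longrightarrow> derivable S (add_mset b \<Gamma>) \<phi>
          \<Longrightarrow> derivable S (add_mset (Or a b) \<Gamma>) \<phi>"
| n:    "has_n S \<Longrightarrow> derivable S (add_mset (Neg a) (add_mset b \<Gamma>)) a
          \<Longrightarrow> derivable S (add_mset (Neg a) (add_mset a \<Gamma>)) b
          \<Longrightarrow> derivable S (add_mset (Neg a) \<Gamma>) (Neg b)"
| nef:  "has_nef S \<Longrightarrow> derivable S (add_mset (Neg a) \<Gamma>) a
          \<Longrightarrow> derivable S (add_mset (Neg a) \<Gamma>) (Neg b)"
| copc: "has_copc S \<Longrightarrow> derivable S (add_mset (Neg a) (add_mset b \<Gamma>)) a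
          \<Longrightarrow> derivable S (add_mset (Neg a) \<Gamma>) (Neg b)"
| an:   "has_an S \<Longrightarrow> derivable S (add_mset a \<Gamma>) (Neg a) \<Longrightarrow> derivable S \<Gamma> (Neg a)"

record 'a nalg =
  carrier :: "'a set"
  meet :: "'a \<Rightarrow> 'a \<Rightarrow> 'a"
  join :: "'a \<Rightarrow> 'a \<Rightarrow> 'a"
  imp  :: "'a \<Rightarrow> 'a \<Rightarrow> 'a"
  one  :: "'a"
  neg  :: "'a \<Rightarrow> 'a"

definition le :: "'a nalg \<Rightarrow> 'a \<Rightarrow> 'a \<Rightarrow> bool" where
  "le A x y \<longleftrightarrow> meet A x y = x"

definition rpc_lattice :: "'a nalg \<Rightarrow> bool" where
  "rpc_lattice A \<longleftrightarrow>
     one A \<in> carrier A \<and>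
     (\<forall>x\<in>carrier A. \<forall>y\<in>carrier A.
        meet A x y \<in> carrier A \<and> join A x y \<in> carrier A \<and> imp A x y \<in> carrier A) \<and>
     (\<forall>x\<in>carrier A. neg A x \<in> carrier A) \<and>
     (\<forall>x\<in>carrier A. \<forall>y\<in>carrier A. \<forall>z\<in>carrier A.
        meet A x (meet A y z) = meet A (meet A x y) z \<and>
        join A x (join A y z) = join A (join A x y) z) \<and>
     (\<forall>x\<in>carrier A. \<forall>y\<in>carrier A.
        meet A x y = meet A y x \<and> join A x y = join A y x \<and>
        meet A x (join A x y) = x \<and> join A x (meet A x y) = x) \<and>
     (\<forall>x\<in>carrier A. le A x (one A)) \<and>
     (\<forall>a\<in>carrier A. \<forall>b\<in>carrier A. \<forall>c\<in>carrier A.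
        le A c (imp A a b) \<longleftrightarrow> le A (meet A c a) b)"

definition iffA :: "'a nalg \<Rightarrow> 'a \<Rightarrow> 'a \<Rightarrow> 'a" where
  "iffA A x y = meet A (imp A x y) (imp A y x)"

definition N_algebra :: "'a nalg \<Rightarrow> bool" where
  "N_algebra A \<longleftrightarrow> rpc_lattice A \<and>
     (\<forall>p\<in>carrier A. \<forall>q\<in>carrier A.
        imp A (iffA A p q) (iffA A (neg A p) (neg A q)) = one A)"

definition NeF_algebra :: "'a nalg \<Rightarrow> bool" where
  "NeF_algebra A \<longleftrightarrow> N_algebra A \<and>
     (\<forall>p\<in>carrier A. \<forall>q\<in>carrier A. imp A (meet A p (neg A p)) (neg A q) = one A)"

definition CoPC_algebra :: "'a nalg \<Rightarrow> bool" where
  "CoPC_algebra A \<longleftrightarrow> N_algebra A \<and>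
     (\<forall>p\<in>carrier A. \<forall>q\<in>carrier A.
        imp A (imp A p q) (imp A (neg A q) (neg A p)) = one A)"

definition CC_lattice :: "'a nalg \<Rightarrow> bool" where
  "CC_lattice A \<longleftrightarrow> CoPC_algebra A \<and>
     (\<forall>p\<in>carrier A. imp A (imp A p (neg A p)) (neg A p) = one A)"

fun variety :: "system \<Rightarrow> 'a nalg \<Rightarrow> bool" where
  "variety G3N A = N_algebra A"
| "variety G3NeF A = NeF_algebra A"
| "variety G3CoPC A = CoPC_algebra A"
| "variety G3MPC A = CC_lattice A"

fun eval :: "'a nalg \<Rightarrow> (nat \<Rightarrow> 'a) \<Rightarrow> form \<Rightarrow> 'a" where
  "eval A v (Var p) = v p"
| "eval A v Top = one A"
| "eval A v (And a b) = meet A (eval A v a) (eval A v b)"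
| "eval A v (Or a b) = join A (eval A v a) (eval A v b)"
| "eval A v (Imp a b) = imp A (eval A v a) (eval A v b)"
| "eval A v (Neg a) = neg A (eval A v a)"

text \<open>Big conjunction of a multiset (Top if empty); the listing order is arbitrary,
  which is irrelevant up to the lattice laws.\<close>
fun conj_list :: "form list \<Rightarrow> form" where
  "conj_list [] = Top"
| "conj_list [a] = a"
| "conj_list (a # b # xs) = And a (conj_list (b # xs))"

definition big_conj :: "form multiset \<Rightarrow> form" where
  "big_conj \<Gamma> = conj_list (SOME xs. mset xs = \<Gamma>)"

text \<open>The equation phi ~ 1 is valid in the variety of S, ranging over all algebras
  whose carrier lives in type 'a.\<close>
definition valid :: "'a itself \<Rightarrow> system \<Rightarrow> form \<Rightarrow> bool" where
  "valid _ S \<phi> \<longleftrightarrow>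
     (\<forall>A :: 'a nalg. \<forall>v. variety S A \<longrightarrow> (\<forall>p. v p \<in> carrier A) \<longrightarrow> eval A v \<phi> = one A)"

end

theory Submission
  imports Defs "HOL-Library.Countable"
begin

(* Soundness: read a sequent \<Gamma> \<Rightarrow> \<phi> as "every c below all formulas of \<Gamma> is below \<phi>"; each rule
   then becomes an inference about such lower bounds that is valid in the corresponding variety.

   Completeness: the formulas modulo interderivability form an algebra of the right variety, because
   its defining equations are derivable, and validity in it of \<And>\<Gamma> \<rightarrow> \<phi> means derivability.
   This Lindenbaum construction needs cut, which is admissible: with the rules presented as schemas
   acting on an arbitrary context, height-preserving weakening and inversion hold uniformly, and a cut
   is eliminated by induction on the cut formula and then on the sum of the heights of the two
   derivations. *)

section \<open>Height-bounded derivations\<close>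

(* Rule ps P \<phi> stands for the inferences from X + \<Gamma> \<Rightarrow> \<psi>, for all (X, \<psi>) \<in> set ps, to
   P + \<Gamma> \<Rightarrow> \<phi>, for every context \<Gamma>. *)
datatype rule =
  Rule "(form multiset \<times> form) list" "form multiset" form

inductive_set rules :: "system \<Rightarrow> rule set" for S where
  impR: "Rule [({#a#}, b)] {#} (Imp a b) \<in> rules S"
| impL: "Rule [({#Imp a b#}, a), ({#b#}, \<phi>)] {#Imp a b#} \<phi> \<in> rules S"
| andR: "Rule [({#}, a), ({#}, b)] {#} (And a b) \<in> rules S"
| andL: "Rule [({#a, b#}, \<phi>)] {#And a b#} \<phi> \<in> rules S"
| orR1: "Rule [({#}, a)] {#} (Or a b) \<in> rules S"
| orR2: "Rule [({#}, b)] {#} (Or a b) \<in> rules S"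
| orL:  "Rule [({#a#}, \<phi>), ({#b#}, \<phi>)] {#Or a b#} \<phi> \<in> rules S"
| n:    "has_n S \<Longrightarrow> Rule [({#Neg a, b#}, a), ({#Neg a, a#}, b)] {#Neg a#} (Neg b) \<in> rules S"
| nef:  "has_nef S \<Longrightarrow> Rule [({#Neg a#}, a)] {#Neg a#} (Neg b) \<in> rules S"
| copc: "has_copc S \<Longrightarrow> Rule [({#Neg a, b#}, a)] {#Neg a#} (Neg b) \<in> rules S"
| an:   "has_an S \<Longrightarrow> Rule [({#a#}, Neg a)] {#} (Neg a) \<in> rules S"

(* hderivable S n: derivable with height at most n; axioms are admitted at every height. *)
inductive hderivable :: "system \<Rightarrow> nat \<Rightarrow> form multiset \<Rightarrow> form \<Rightarrow> bool" for S where
  ax:   "hderivable S n (add_mset (Var p) \<Gamma>) (Var p)"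
| top:  "hderivable S n \<Gamma> Top"
| rule: "Rule ps P \<phi> \<in> rules S \<Longrightarrow> \<forall>(X, \<psi>) \<in> set ps. hderivable S n (X + \<Gamma>) \<psi>
          \<Longrightarrow> hderivable S (Suc n) (P + \<Gamma>) \<phi>"

lemma hderivable_mono: "hderivable S n \<Gamma> \<phi> \<Longrightarrow> n \<le> m \<Longrightarrow> hderivable S m \<Gamma> \<phi>"
proof (induction arbitrary: m rule: hderivable.induct)
  case (rule ps P \<phi> n \<Gamma>)
  then obtain m' where m: "m = Suc m'" "n \<le> m'" by (cases m) auto
  have "\<forall>(X, \<psi>) \<in> set ps. hderivable S m' (X + \<Gamma>) \<psi>"
    using rule.IH m(2) by fastforce
  then show ?case unfolding m(1) by (rule hderivable.rule[OF rule.hyps(1)])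
qed (auto intro: hderivable.ax hderivable.top)

lemma hderivable_rule_exists:
  assumes "Rule ps P \<phi> \<in> rules S" and "\<forall>(X, \<psi>) \<in> set ps. \<exists>n. hderivable S n (X + \<Gamma>) \<psi>"
  shows "\<exists>n. hderivable S n (P + \<Gamma>) \<phi>"
proof -
  obtain h where h: "\<forall>x \<in> set ps. hderivable S (h x) (fst x + \<Gamma>) (snd x)"
    using bchoice[OF assms(2)[unfolded case_prod_beta]] by blast
  have "hderivable S (sum_list (map h ps)) (X + \<Gamma>) \<psi>" if "(X, \<psi>) \<in> set ps" for X \<psi>
  proof (rule hderivable_mono)
    show "hderivable S (h (X, \<psi>)) (X + \<Gamma>) \<psi>" using h that by fastforce
    show "h (X, \<psi>) \<le> sum_list (map h ps)" by (rule member_le_sum_list) (simp_all add: that)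
  qed
  then show ?thesis using hderivable.rule[OF assms(1)] by blast
qed

lemma derivable_rule:
  "Rule ps P \<phi> \<in> rules S \<Longrightarrow> \<forall>(X, \<psi>) \<in> set ps. derivable S (X + \<Gamma>) \<psi> \<Longrightarrow> derivable S (P + \<Gamma>) \<phi>"
proof (induction rule: rules.cases)
  case (impR a b) then show ?case using derivable.impR[of S a \<Gamma> b] by simp
next
  case (impL a b \<phi>) then show ?case using derivable.impL[of S a b \<Gamma> \<phi>] by simp
next
  case (andR a b) then show ?case using derivable.andR[of S \<Gamma> a b] by simp
next
  case (andL a b \<phi>) then show ?case using derivable.andL[of S a b \<Gamma> \<phi>] by simp
next
  case (orR1 a b) then show ?case using derivable.orR1[of S \<Gamma> a b] by simp
next
  case (orR2 b a) then show ?case using derivable.orR2[of S \<Gamma> b a] by simp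
next
  case (orL a \<phi> b) then show ?case using derivable.orL[of S a \<Gamma> \<phi> b] by simp
next
  case (n a b) then show ?case using derivable.n[of S a b \<Gamma>] by simp
next
  case (nef a b) then show ?case using derivable.nef[of S a \<Gamma> b] by simp
next
  case (copc a b) then show ?case using derivable.copc[of S a b \<Gamma>] by simp
next
  case (an a) then show ?case using derivable.an[of S a \<Gamma>] by simp
qed

lemma hderivable_derivable: "hderivable S n \<Gamma> \<phi> \<Longrightarrow> derivable S \<Gamma> \<phi>"
proof (induction rule: hderivable.induct)
  case (rule ps P \<phi> n \<Gamma>)
  then show ?case by (intro derivable_rule) auto
qed (auto intro: derivable.ax derivable.top)

lemma derivable_iff_hderivable: "derivable S \<Gamma> \<phi> \<longleftrightarrow> (\<exists>n. hderivable S n \<Gamma> \<phi>)"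
proof
  show "derivable S \<Gamma> \<phi> \<Longrightarrow> \<exists>n. hderivable S n \<Gamma> \<phi>"
  proof (induction rule: derivable.induct)
    case (ax p \<Gamma>) then show ?case by (blast intro: hderivable.ax)
  next
    case (top \<Gamma>) then show ?case by (blast intro: hderivable.top)
  next
    case (impR a \<Gamma> b) then show ?case using hderivable_rule_exists[OF rules.impR, where \<Gamma> = \<Gamma>] by simp
  next
    case (impL a b \<Gamma> \<phi>) then show ?case using hderivable_rule_exists[OF rules.impL, where \<Gamma> = \<Gamma>] by simp
  next
    case (andR \<Gamma> a b) then show ?case using hderivable_rule_exists[OF rules.andR, where \<Gamma> = \<Gamma>] by simp
  next
    case (andL a b \<Gamma> \<phi>) then show ?case using hderivable_rule_exists[OF rules.andL, where \<Gamma> = \<Gamma>] by simp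
  next
    case (orR1 \<Gamma> a b) then show ?case using hderivable_rule_exists[OF rules.orR1, where \<Gamma> = \<Gamma>] by simp
  next
    case (orR2 \<Gamma> b a) then show ?case using hderivable_rule_exists[OF rules.orR2, where \<Gamma> = \<Gamma>] by simp
  next
    case (orL a \<Gamma> \<phi> b) then show ?case using hderivable_rule_exists[OF rules.orL, where \<Gamma> = \<Gamma>] by simp
  next
    case (n a b \<Gamma>) then show ?case using hderivable_rule_exists[OF rules.n, where \<Gamma> = \<Gamma>] by simp
  next
    case (nef a \<Gamma> b) then show ?case using hderivable_rule_exists[OF rules.nef, where \<Gamma> = \<Gamma>] by simp
  next
    case (copc a b \<Gamma>) then show ?case using hderivable_rule_exists[OF rules.copc, where \<Gamma> = \<Gamma>] by simp
  next
    case (an a \<Gamma>) then show ?case using hderivable_rule_exists[OF rules.an, where \<Gamma> = \<Gamma>] by simp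
  qed
  show "\<exists>n. hderivable S n \<Gamma> \<phi> \<Longrightarrow> derivable S \<Gamma> \<phi>"
    using hderivable_derivable by blast
qed

lemma hderivable_weaken: "hderivable S n \<Gamma> \<phi> \<Longrightarrow> hderivable S n (\<Delta> + \<Gamma>) \<phi>"
proof (induction rule: hderivable.induct)
  case (ax n p \<Gamma>)
  then show ?case using hderivable.ax[of S n p "\<Delta> + \<Gamma>"] by simp
next
  case (top n \<Gamma>)
  then show ?case by (rule hderivable.top)
next
  case (rule ps P \<phi> n \<Gamma>)
  then have "\<forall>(X, \<psi>) \<in> set ps. hderivable S n (X + (\<Delta> + \<Gamma>)) \<psi>"
    by (auto simp: add.left_commute)
  then show ?case using hderivable.rule[OF rule.hyps(1)] by (simp add: add.left_commute)
qed

lemma derivable_weaken: "derivable S \<Gamma> \<phi> \<Longrightarrow> derivable S (\<Delta> + \<Gamma>) \<phi>"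
  using derivable_iff_hderivable hderivable_weaken by metis

lemma rule_principal:
  assumes "Rule ps P \<phi> \<in> rules S"
  shows "size P \<le> 1" and "A \<in># P \<Longrightarrow> A \<noteq> Var p \<and> A \<noteq> Top"
  using assms by (cases rule: rules.cases; auto)+

lemma add_mset_eq_plus_cases:
  assumes "add_mset A \<Gamma> = P + \<Gamma>'" and "size P \<le> 1"
  obtains K where "\<Gamma>' = add_mset A K" and "\<Gamma> = P + K"
    | "P = {#A#}" and "\<Gamma>' = \<Gamma>"
proof (cases "A \<in># \<Gamma>'")
  case True
  then obtain K where "\<Gamma>' = add_mset A K" by (metis multi_member_split)
  with assms(1) show ?thesis using that(1) by simp
next
  case False
  then have "A \<in># P" using assms(1) by (metis union_iff union_single_eq_member)
  then obtain P' where "P = add_mset A P'" by (metis multi_member_split)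
  with assms(2) have "P = {#A#}" by simp
  with assms(1) show ?thesis using that(2) by simp
qed

inductive left_inversion :: "form \<Rightarrow> form multiset \<Rightarrow> bool" where
  "left_inversion (And a b) {#a, b#}"
| "left_inversion (Or a b) {#a#}"
| "left_inversion (Or a b) {#b#}"
| "left_inversion (Imp a b) {#b#}"

lemma left_inversion_premise:
  "Rule ps {#A#} \<phi> \<in> rules S \<Longrightarrow> left_inversion A Y \<Longrightarrow> (Y, \<phi>) \<in> set ps"
  by (auto elim!: rules.cases left_inversion.cases)

lemma hderivable_left_inversion:
  assumes "hderivable S n (add_mset A \<Gamma>) \<phi>" and inv: "left_inversion A Y"
  shows "hderivable S n (Y + \<Gamma>) \<phi>"
  using assms(1)
proof (induction n "add_mset A \<Gamma>" \<phi> arbitrary: \<Gamma> rule: hderivable.induct)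
  case (ax n p \<Gamma>')
  have "A \<noteq> Var p" using inv by (cases rule: left_inversion.cases) auto
  then obtain K where "\<Gamma> = add_mset (Var p) K" using ax by (metis add_eq_conv_ex)
  then show ?case by (simp add: hderivable.ax)
next
  case (top n)
  then show ?case by (rule hderivable.top)
next
  case (rule ps P \<phi> n \<Gamma>')
  from rule.hyps(3)[symmetric] rule_principal(1)[OF rule.hyps(1)] show ?case
  proof (cases rule: add_mset_eq_plus_cases)
    case (1 K)
    with rule.hyps(2) have "\<forall>(X, \<psi>) \<in> set ps. hderivable S n (X + (Y + K)) \<psi>"
      by (fastforce simp: add.left_commute)
    then have "hderivable S (Suc n) (P + (Y + K)) \<phi>" by (rule hderivable.rule[OF rule.hyps(1)])
    then show ?thesis using 1(2) by (simp add: add.left_commute)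
  next
    case 2
    then have "(Y, \<phi>) \<in> set ps" using left_inversion_premise rule.hyps(1) inv by blast
    then have "hderivable S n (Y + \<Gamma>) \<phi>" using rule.hyps(2) 2(2) by auto
    then show ?thesis by (rule hderivable_mono) simp
  qed
qed

lemma rule_premise_antecedent:
  "Rule ps P \<phi> \<in> rules S \<Longrightarrow> (X, \<psi>) \<in> set ps \<Longrightarrow> P \<subseteq># X \<or> (\<exists>A. P = {#A#} \<and> left_inversion A X)"
  by (auto elim!: rules.cases intro: left_inversion.intros)

lemma hderivable_in_premise_context:
  assumes r: "Rule ps P \<phi> \<in> rules S" and p: "(X, \<psi>) \<in> set ps" and d: "hderivable S n (P + \<Gamma>) C"
  shows "hderivable S n (X + \<Gamma>) C"
  using rule_premise_antecedent[OF r p]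
proof
  assume "P \<subseteq># X"
  then have "X + \<Gamma> = (X - P) + (P + \<Gamma>)" by (simp add: add.assoc[symmetric])
  then show ?thesis using hderivable_weaken[OF d, of "X - P"] by argo
next
  assume "\<exists>A. P = {#A#} \<and> left_inversion A X"
  then show ?thesis using hderivable_left_inversion d by auto
qed

section \<open>Admissibility of cut\<close>

definition admits_cut :: "system \<Rightarrow> form \<Rightarrow> bool" where
  "admits_cut S A \<longleftrightarrow> (\<forall>\<Gamma> C. derivable S \<Gamma> A \<longrightarrow> derivable S (add_mset A \<Gamma>) C \<longrightarrow> derivable S \<Gamma> C)"

lemma admits_cutD:
  "admits_cut S A \<Longrightarrow> derivable S \<Gamma> A \<Longrightarrow> derivable S (add_mset A \<Gamma>) C \<Longrightarrow> derivable S \<Gamma> C"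
  unfolding admits_cut_def by blast

definition cut_below :: "system \<Rightarrow> form \<Rightarrow> nat \<Rightarrow> bool" where
  "cut_below S A k \<longleftrightarrow> (\<forall>n m \<Gamma> C. n + m < k \<longrightarrow>
     hderivable S n \<Gamma> A \<longrightarrow> hderivable S m (add_mset A \<Gamma>) C \<longrightarrow> derivable S \<Gamma> C)"

lemma cut_right_nonprincipal:
  assumes IH: "cut_below S A (n + Suc m)" and L: "hderivable S n (P + K) A"
    and r: "Rule ps P C \<in> rules S" and R: "\<forall>(X, \<psi>) \<in> set ps. hderivable S m (X + add_mset A K) \<psi>"
  shows "derivable S (P + K) C"
proof (rule derivable_rule[OF r], clarify)
  fix X \<psi> assume p: "(X, \<psi>) \<in> set ps"
  have "hderivable S n (X + K) A" using hderivable_in_premise_context[OF r p L] .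
  moreover have "hderivable S m (add_mset A (X + K)) \<psi>" using R p by auto
  ultimately show "derivable S (X + K) \<psi>" using IH unfolding cut_below_def by auto
qed

lemma cut_left_premises:
  assumes IH: "cut_below S A (Suc n + m)" and l: "Rule ps P A \<in> rules S"
    and L: "\<forall>(X, \<psi>) \<in> set ps. hderivable S n (X + K) \<psi>" and R: "hderivable S m (add_mset A (P + K)) C"
  shows "\<forall>X. (X, A) \<in> set ps \<longrightarrow> derivable S (X + K) C"
proof clarify
  fix X assume p: "(X, A) \<in> set ps"
  have "hderivable S m (P + add_mset A K) C" using R by simp
  from hderivable_in_premise_context[OF l p this]
  have "hderivable S m (add_mset A (X + K)) C" by simp
  then show "derivable S (X + K) C" using IH L p unfolding cut_below_def by fastforce
qed

lemma cut_right_premises: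
  assumes IH: "cut_below S A (n + Suc m)" and L: "hderivable S n \<Gamma> A"
    and R: "\<forall>(X, \<psi>) \<in> set ps. hderivable S m (X + \<Gamma>) \<psi>"
  shows "\<forall>(X, \<psi>) \<in> set ps. derivable S (X - {#A#} + \<Gamma>) \<psi>"
proof clarify
  fix X \<psi> assume p: "(X, \<psi>) \<in> set ps"
  show "derivable S (X - {#A#} + \<Gamma>) \<psi>"
  proof (cases "A \<in># X")
    case True
    then have "hderivable S m (add_mset A (X - {#A#} + \<Gamma>)) \<psi>" using R p by auto
    moreover have "hderivable S n (X - {#A#} + \<Gamma>) A" using hderivable_weaken[OF L] .
    ultimately show ?thesis using IH unfolding cut_below_def by auto
  next
    case False
    then show ?thesis using R p hderivable_derivable by fastforce
  qed
qed

lemma cut_reduction_left_rule: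
  assumes l: "Rule ps P A \<in> rules S" and P: "P = {#Q#}" "\<forall>g. Q \<noteq> Neg g"
    and L: "\<forall>(X, \<psi>) \<in> set ps. derivable S (X + K) \<psi>"
    and LC: "\<forall>X. (X, A) \<in> set ps \<longrightarrow> derivable S (X + K) C"
  shows "derivable S (P + K) C"
  using l
proof (cases rule: rules.cases)
  case (impL a b)
  then show ?thesis using L LC derivable.impL[of S a b K C] by simp
next
  case (andL a b)
  then show ?thesis using LC derivable.andL[of S a b K C] by simp
next
  case (orL a b)
  then show ?thesis using LC derivable.orL[of S a K C b] by simp
qed (use P in simp_all)

lemma cut_reduction_positive:
  assumes sub: "\<And>B. size B < size A \<Longrightarrow> admits_cut S B"
    and l: "Rule ps' {#} A \<in> rules S" and A: "\<forall>a. A \<noteq> Neg a"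
    and L: "\<forall>(X, \<psi>) \<in> set ps'. derivable S (X + \<Gamma>) \<psi>"
    and r: "Rule ps {#A#} C \<in> rules S" and R: "\<forall>(X, \<psi>) \<in> set ps. derivable S (X - {#A#} + \<Gamma>) \<psi>"
  shows "derivable S \<Gamma> C"
  using l
proof (cases rule: rules.cases)
  case (impR a b)
  from r have "ps = [({#Imp a b#}, a), ({#b#}, C)]" unfolding impR by (cases rule: rules.cases) simp_all
  with R have "derivable S \<Gamma> a" and "derivable S (add_mset b \<Gamma>) C" by (simp_all add: impR)
  moreover have "derivable S (add_mset a \<Gamma>) b" using L impR by simp
  moreover have "admits_cut S a" and "admits_cut S b" using sub impR by simp_all
  ultimately show ?thesis by (meson admits_cutD)
next
  case (andR a b)
  from r have "ps = [({#a, b#}, C)]" unfolding andR by (cases rule: rules.cases) simp_all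
  with R have "derivable S (add_mset a (add_mset b \<Gamma>)) C" by (simp add: andR)
  moreover have "derivable S (add_mset b \<Gamma>) a" and "derivable S \<Gamma> b"
    using L andR derivable_weaken[of S \<Gamma> a "{#b#}"] by simp_all
  moreover have "admits_cut S a" and "admits_cut S b" using sub andR by simp_all
  ultimately show ?thesis by (meson admits_cutD)
next
  case (orR1 a b)
  from r have "ps = [({#a#}, C), ({#b#}, C)]" unfolding orR1 by (cases rule: rules.cases) simp_all
  with R L have "derivable S (add_mset a \<Gamma>) C" and "derivable S \<Gamma> a" by (simp_all add: orR1)
  moreover have "admits_cut S a" using sub orR1 by simp
  ultimately show ?thesis by (meson admits_cutD)
next
  case (orR2 b a)
  from r have "ps = [({#a#}, C), ({#b#}, C)]" unfolding orR2 by (cases rule: rules.cases) simp_all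
  with R L have "derivable S (add_mset b \<Gamma>) C" and "derivable S \<Gamma> b" by (simp_all add: orR2)
  moreover have "admits_cut S b" using sub orR2 by simp
  ultimately show ?thesis by (meson admits_cutD)
qed (use A in simp_all)

lemma negation_rule_cases:
  assumes "Rule ps {#Neg a#} C \<in> rules S"
  obtains b where "C = Neg b" "has_n S" "ps = [({#Neg a, b#}, a), ({#Neg a, a#}, b)]"
    | b where "C = Neg b" "has_nef S" "ps = [({#Neg a#}, a)]"
    | b where "C = Neg b" "has_copc S" "ps = [({#Neg a, b#}, a)]"
  using assms by (cases rule: rules.cases) auto

lemma negation_rules_exclusive:
  "has_n S \<Longrightarrow> \<not> has_copc S" "has_nef S \<Longrightarrow> \<not> has_copc S"
  "has_an S \<Longrightarrow> \<not> has_n S" "has_an S \<Longrightarrow> \<not> has_nef S"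
  by (auto simp: has_n_def has_nef_def has_copc_def has_an_def)

lemma cut_reduction_n:
  assumes cut: "admits_cut S a" and "has_n S"
    and L1: "derivable S (add_mset a \<Gamma>) g" and L2: "derivable S (add_mset g \<Gamma>) a"
    and \<Gamma>: "\<Gamma> = add_mset (Neg g) K"
    and r: "Rule ps {#Neg a#} C \<in> rules S" and R: "\<forall>(X, \<psi>) \<in> set ps. derivable S (X - {#Neg a#} + \<Gamma>) \<psi>"
  shows "derivable S \<Gamma> C"
  using r
proof (cases rule: negation_rule_cases)
  case (1 b)
  with R have R1: "derivable S (add_mset b \<Gamma>) a" and R2: "derivable S (add_mset a \<Gamma>) b"
    by (simp_all add: add_mset_commute)
  have "derivable S (add_mset b \<Gamma>) g"
    using admits_cutD[OF cut R1] derivable_weaken[OF L1, of "{#b#}"] by (simp add: add_mset_commute)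
  moreover have "derivable S (add_mset g \<Gamma>) b"
    using admits_cutD[OF cut L2] derivable_weaken[OF R2, of "{#g#}"] by (simp add: add_mset_commute)
  ultimately show ?thesis using derivable.n[of S g b K] \<Gamma> 1 by (simp add: add_mset_commute)
next
  case (2 b)
  with R have "derivable S \<Gamma> a" by simp
  then have "derivable S \<Gamma> g" using admits_cutD[OF cut _ L1] by simp
  then show ?thesis using derivable.nef[of S g K b] \<Gamma> 2 by simp
qed (use \<open>has_n S\<close> negation_rules_exclusive in simp)

lemma cut_reduction_negation:
  assumes cut: "admits_cut S a"
    and l: "Rule ps' P (Neg a) \<in> rules S" and P: "\<forall>Q \<in># P. \<exists>g. Q = Neg g"
    and L: "\<forall>(X, \<psi>) \<in> set ps'. derivable S (X + K) \<psi>"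
    and LC: "\<forall>X. (X, Neg a) \<in> set ps' \<longrightarrow> derivable S (X + K) C"
    and r: "Rule ps {#Neg a#} C \<in> rules S"
    and R: "\<forall>(X, \<psi>) \<in> set ps. derivable S (X - {#Neg a#} + (P + K)) \<psi>"
  shows "derivable S (P + K) C"
  using l
proof (cases rule: rules.cases)
  case (n g)
  then show ?thesis using cut_reduction_n[OF cut, where g = g and \<Gamma> = "add_mset (Neg g) K"] L r R
    by (simp add: add_mset_commute)
next
  case (nef g)
  from r obtain b where "C = Neg b" by (cases rule: negation_rule_cases)
  then show ?thesis using L derivable.nef[of S g K b] nef by simp
next
  case (copc g)
  then have L1: "derivable S (add_mset a (add_mset (Neg g) K)) g" using L by (simp add: add_mset_commute)
  from r show ?thesis
  proof (cases rule: negation_rule_cases)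
    case (3 b)
    with R copc have "derivable S (add_mset b (add_mset (Neg g) K)) a" by (simp add: add_mset_commute)
    then have "derivable S (add_mset b (add_mset (Neg g) K)) g"
      using admits_cutD[OF cut] derivable_weaken[OF L1, of "{#b#}"] by (simp add: add_mset_commute)
    then show ?thesis using derivable.copc[of S g b K] copc 3 by (simp add: add_mset_commute)
  qed (use copc negation_rules_exclusive in simp_all)
next
  case an
  from r show ?thesis
  proof (cases rule: negation_rule_cases)
    case (3 b)
    with R an have "derivable S (add_mset b K) a" by simp
    moreover have "derivable S (add_mset a (add_mset b K)) C"
      using LC an derivable_weaken[of S "add_mset a K" C "{#b#}"] by (simp add: add_mset_commute)
    ultimately have "derivable S (add_mset b K) (Neg b)" using admits_cutD[OF cut] 3 by simp
    then show ?thesis using derivable.an[of S b K] an 3 by simp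
  qed (use an negation_rules_exclusive in simp_all)
qed (use P in simp_all)

lemma cut_reduction:
  assumes sub: "\<And>B. size B < size A \<Longrightarrow> admits_cut S B"
    and l: "Rule ps' P A \<in> rules S" and L: "\<forall>(X, \<psi>) \<in> set ps'. derivable S (X + K) \<psi>"
    and LC: "\<forall>X. (X, A) \<in> set ps' \<longrightarrow> derivable S (X + K) C"
    and r: "Rule ps {#A#} C \<in> rules S" and R: "\<forall>(X, \<psi>) \<in> set ps. derivable S (X - {#A#} + (P + K)) \<psi>"
  shows "derivable S (P + K) C"
proof (cases "\<exists>Q. P = {#Q#} \<and> (\<forall>g. Q \<noteq> Neg g)")
  case True
  then show ?thesis using cut_reduction_left_rule l L LC by blast
next
  case no_left_rule: False
  show ?thesis
  proof (cases "\<exists>a. A = Neg a")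
    case True
    then obtain a where A: "A = Neg a" by blast
    have "P = {#} \<or> (\<exists>Q. P = {#Q#})" using rule_principal(1)[OF l] by (cases P) auto
    then have "\<forall>Q \<in># P. \<exists>g. Q = Neg g" using no_left_rule by auto
    then show ?thesis using cut_reduction_negation[of S a] sub[of a] l L LC r R A by simp
  next
    case False
    have "P = {#}" using l False no_left_rule by (cases rule: rules.cases) auto
    then show ?thesis using cut_reduction_positive[OF sub] l L r R False by simp
  qed
qed

lemma cut_right_principal:
  assumes sub: "\<And>B. size B < size A \<Longrightarrow> admits_cut S B"
    and IH: "cut_below S A (n + Suc m)" and L: "hderivable S n \<Gamma> A"
    and r: "Rule ps {#A#} C \<in> rules S" and R: "\<forall>(X, \<psi>) \<in> set ps. hderivable S m (X + \<Gamma>) \<psi>"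
  shows "derivable S \<Gamma> C"
proof -
  have R': "\<forall>(X, \<psi>) \<in> set ps. derivable S (X - {#A#} + \<Gamma>) \<psi>"
    using cut_right_premises[OF IH L R] .
  have R'': "hderivable S (Suc m) (add_mset A \<Gamma>) C" using hderivable.rule[OF r R] by simp
  have A: "A \<noteq> Var p" "A \<noteq> Top" for p using rule_principal(2)[OF r] by auto
  from L show ?thesis
  proof (cases rule: hderivable.cases)
    case (rule ps' P n' K)
    then have l: "Rule ps' P A \<in> rules S" and \<Gamma>: "\<Gamma> = P + K" and n: "n = Suc n'"
      and L': "\<forall>(X, \<psi>) \<in> set ps'. hderivable S n' (X + K) \<psi>" by simp_all
    have "\<forall>(X, \<psi>) \<in> set ps'. derivable S (X + K) \<psi>"
      using L' hderivable_derivable by fastforce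
    moreover have "\<forall>X. (X, A) \<in> set ps' \<longrightarrow> derivable S (X + K) C"
      using cut_left_premises[of S A n' "Suc m" ps' P K C] IH l L' n \<Gamma> R'' by simp
    ultimately show ?thesis using cut_reduction[OF sub l] r R' \<Gamma> by simp
  qed (use A in simp_all)
qed

(* The right derivation is analysed first: while A is not principal in its last rule, the cut
   permutes upwards, so atomic cut formulas never need a contraction lemma. *)
lemma cut_hderivable:
  assumes sub: "\<And>B. size B < size A \<Longrightarrow> admits_cut S B"
  shows "hderivable S n \<Gamma> A \<Longrightarrow> hderivable S m (add_mset A \<Gamma>) C \<Longrightarrow> derivable S \<Gamma> C"
proof (induction "n + m" arbitrary: n m \<Gamma> C rule: less_induct)
  case less
  note L = less.prems(1)
  have IH: "cut_below S A (n + m)" using less.hyps unfolding cut_below_def by blast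
  from less.prems(2) show ?case
  proof (cases rule: hderivable.cases)
    case (ax p \<Gamma>')
    then show ?thesis using hderivable_derivable[OF L] by (metis add_eq_conv_ex derivable.ax)
  next
    case top
    then show ?thesis by (simp add: derivable.top)
  next
    case (rule ps P m' \<Gamma>')
    then have r: "Rule ps P C \<in> rules S" and eq: "add_mset A \<Gamma> = P + \<Gamma>'" and m: "m = Suc m'"
      and R: "\<forall>(X, \<psi>) \<in> set ps. hderivable S m' (X + \<Gamma>') \<psi>" by simp_all
    from eq rule_principal(1)[OF r] show ?thesis
    proof (cases rule: add_mset_eq_plus_cases)
      case (1 K)
      then show ?thesis using cut_right_nonprincipal[of S A n m' P K ps C] IH L r R m by simp
    next
      case 2
      have "cut_below S A (n + Suc m')" using IH m by simp
      moreover have "Rule ps {#A#} C \<in> rules S" using r 2 by simp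
      moreover have "\<forall>(X, \<psi>) \<in> set ps. hderivable S m' (X + \<Gamma>) \<psi>" using R 2 by simp
      ultimately show ?thesis using cut_right_principal[OF sub _ L] by blast
    qed
  qed
qed

theorem admits_cut: "admits_cut S A"
proof (induction A rule: measure_induct_rule[of size])
  case (less A)
  have "derivable S \<Gamma> C" if L: "derivable S \<Gamma> A" and R: "derivable S (add_mset A \<Gamma>) C" for \<Gamma> C
  proof -
    obtain n m where "hderivable S n \<Gamma> A" and "hderivable S m (add_mset A \<Gamma>) C"
      using L R derivable_iff_hderivable by blast
    then show ?thesis using cut_hderivable[OF less] by blast
  qed
  then show ?case unfolding admits_cut_def by blast
qed

lemma derivable_cut: "derivable S \<Gamma> A \<Longrightarrow> derivable S (add_mset A \<Gamma>) C \<Longrightarrow> derivable S \<Gamma> C"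
  using admits_cut admits_cutD by blast

section \<open>Soundness\<close>

locale brouwerian =
  fixes A :: "'a nalg"
  assumes rpc_lattice: "rpc_lattice A"
begin

lemma one_closed [simp]: "one A \<in> carrier A"
  and meet_closed [simp]: "x \<in> carrier A \<Longrightarrow> y \<in> carrier A \<Longrightarrow> meet A x y \<in> carrier A"
  and join_closed [simp]: "x \<in> carrier A \<Longrightarrow> y \<in> carrier A \<Longrightarrow> join A x y \<in> carrier A"
  and imp_closed [simp]: "x \<in> carrier A \<Longrightarrow> y \<in> carrier A \<Longrightarrow> imp A x y \<in> carrier A"
  and neg_closed [simp]: "x \<in> carrier A \<Longrightarrow> neg A x \<in> carrier A"
  using rpc_lattice unfolding rpc_lattice_def by blast+

lemma iffA_closed [simp]: "x \<in> carrier A \<Longrightarrow> y \<in> carrier A \<Longrightarrow> iffA A x y \<in> carrier A"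
  by (simp add: iffA_def)

lemma meet_assoc:
    "x \<in> carrier A \<Longrightarrow> y \<in> carrier A \<Longrightarrow> z \<in> carrier A \<Longrightarrow> meet A x (meet A y z) = meet A (meet A x y) z"
  and join_assoc:
    "x \<in> carrier A \<Longrightarrow> y \<in> carrier A \<Longrightarrow> z \<in> carrier A \<Longrightarrow> join A x (join A y z) = join A (join A x y) z"
  and meet_comm: "x \<in> carrier A \<Longrightarrow> y \<in> carrier A \<Longrightarrow> meet A x y = meet A y x"
  and join_comm: "x \<in> carrier A \<Longrightarrow> y \<in> carrier A \<Longrightarrow> join A x y = join A y x"
  and meet_join_absorb: "x \<in> carrier A \<Longrightarrow> y \<in> carrier A \<Longrightarrow> meet A x (join A x y) = x"
  and join_meet_absorb: "x \<in> carrier A \<Longrightarrow> y \<in> carrier A \<Longrightarrow> join A x (meet A x y) = x"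
  and le_one: "x \<in> carrier A \<Longrightarrow> le A x (one A)"
  and le_imp_iff: "a \<in> carrier A \<Longrightarrow> b \<in> carrier A \<Longrightarrow> c \<in> carrier A \<Longrightarrow>
      le A c (imp A a b) \<longleftrightarrow> le A (meet A c a) b"
  using rpc_lattice unfolding rpc_lattice_def by blast+

lemma meet_idem: "x \<in> carrier A \<Longrightarrow> meet A x x = x"
  by (metis meet_join_absorb join_meet_absorb meet_closed)

lemma le_refl: "x \<in> carrier A \<Longrightarrow> le A x x"
  by (simp add: le_def meet_idem)

lemma le_trans: "x \<in> carrier A \<Longrightarrow> y \<in> carrier A \<Longrightarrow> z \<in> carrier A \<Longrightarrow> le A x y \<Longrightarrow> le A y z \<Longrightarrow> le A x z"
  unfolding le_def by (metis meet_assoc)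

lemma le_antisym: "x \<in> carrier A \<Longrightarrow> y \<in> carrier A \<Longrightarrow> le A x y \<Longrightarrow> le A y x \<Longrightarrow> x = y"
  unfolding le_def by (metis meet_comm)

lemma meet_le1: "x \<in> carrier A \<Longrightarrow> y \<in> carrier A \<Longrightarrow> le A (meet A x y) x"
  unfolding le_def by (metis meet_assoc meet_comm meet_idem)

lemma meet_le2: "x \<in> carrier A \<Longrightarrow> y \<in> carrier A \<Longrightarrow> le A (meet A x y) y"
  unfolding le_def by (metis meet_assoc meet_idem)

lemma le_meet_iff:
  "x \<in> carrier A \<Longrightarrow> y \<in> carrier A \<Longrightarrow> z \<in> carrier A \<Longrightarrow> le A z (meet A x y) \<longleftrightarrow> le A z x \<and> le A z y"
  by (metis le_def meet_assoc meet_closed meet_le1 meet_le2 le_trans)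

lemma join_ge1: "x \<in> carrier A \<Longrightarrow> y \<in> carrier A \<Longrightarrow> le A x (join A x y)"
  unfolding le_def by (metis meet_join_absorb)

lemma join_ge2: "x \<in> carrier A \<Longrightarrow> y \<in> carrier A \<Longrightarrow> le A y (join A x y)"
  unfolding le_def by (metis meet_join_absorb join_comm)

lemma le_iff_join_eq: "x \<in> carrier A \<Longrightarrow> y \<in> carrier A \<Longrightarrow> le A x y \<longleftrightarrow> join A x y = y"
  unfolding le_def by (metis meet_join_absorb join_meet_absorb join_comm meet_comm)

lemma join_le_iff:
  "x \<in> carrier A \<Longrightarrow> y \<in> carrier A \<Longrightarrow> z \<in> carrier A \<Longrightarrow> le A (join A x y) z \<longleftrightarrow> le A x z \<and> le A y z"
  by (metis join_assoc join_closed le_iff_join_eq join_ge1 join_ge2 le_trans)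

lemma le_imp_mp:
  "a \<in> carrier A \<Longrightarrow> b \<in> carrier A \<Longrightarrow> c \<in> carrier A \<Longrightarrow> le A c (imp A a b) \<Longrightarrow> le A c a \<Longrightarrow> le A c b"
  by (metis le_refl le_trans meet_closed le_meet_iff le_imp_iff)

lemma le_imp_swap:
  "a \<in> carrier A \<Longrightarrow> b \<in> carrier A \<Longrightarrow> c \<in> carrier A \<Longrightarrow> le A c (imp A a b) \<longleftrightarrow> le A a (imp A c b)"
  by (simp add: le_imp_iff meet_comm)

lemma imp_eq_one_iff:
  assumes "x \<in> carrier A" "y \<in> carrier A"
  shows "imp A x y = one A \<longleftrightarrow> le A x y"
proof -
  have "meet A (one A) x = x" using assms le_one[of x] by (metis le_def meet_comm one_closed)
  then have "le A (one A) (imp A x y) \<longleftrightarrow> le A x y" using assms le_imp_iff by (metis one_closed)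
  then show ?thesis using assms by (metis imp_closed le_antisym le_one le_refl one_closed)
qed

lemma le_by_join_cases:
  assumes "x \<in> carrier A" "y \<in> carrier A" "z \<in> carrier A" "c \<in> carrier A"
    and "le A c (join A x y)" "le A c (imp A x z)" "le A c (imp A y z)"
  shows "le A c z"
proof -
  have "le A x (imp A c z)" and "le A y (imp A c z)"
    using assms le_imp_swap[of x z c] le_imp_swap[of y z c] by simp_all
  then have "le A (join A x y) (imp A c z)" using assms join_le_iff by simp
  then have "le A c (imp A c z)" using assms le_trans[of c "join A x y" "imp A c z"] by simp
  then show ?thesis using assms le_imp_mp[of c z c] le_refl by simp
qed

lemma N_algebra_le_neg:
  assumes "N_algebra A" "x \<in> carrier A" "y \<in> carrier A" "c \<in> carrier A"
    and "le A c (imp A x y)" "le A c (imp A y x)" "le A c (neg A x)"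
  shows "le A c (neg A y)"
proof -
  have "le A (iffA A x y) (iffA A (neg A x) (neg A y))"
    using assms(1-3) imp_eq_one_iff unfolding N_algebra_def by simp
  moreover have "le A c (iffA A x y)" using assms by (simp add: iffA_def le_meet_iff)
  ultimately have "le A c (iffA A (neg A x) (neg A y))"
    using assms le_trans[of c "iffA A x y" "iffA A (neg A x) (neg A y)"] by simp
  then show ?thesis using assms le_imp_mp[of "neg A x" "neg A y" c] by (simp add: iffA_def le_meet_iff)
qed

lemma NeF_algebra_le_neg:
  assumes "NeF_algebra A" "x \<in> carrier A" "y \<in> carrier A" "c \<in> carrier A"
    and "le A c x" "le A c (neg A x)"
  shows "le A c (neg A y)"
proof -
  have "le A (meet A x (neg A x)) (neg A y)"
    using assms(1-3) imp_eq_one_iff unfolding NeF_algebra_def by simp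
  then show ?thesis using assms le_meet_iff le_trans[of c "meet A x (neg A x)" "neg A y"] by simp
qed

lemma CoPC_algebra_le_neg:
  assumes "CoPC_algebra A" "x \<in> carrier A" "y \<in> carrier A" "c \<in> carrier A"
    and "le A c (imp A y x)" "le A c (neg A x)"
  shows "le A c (neg A y)"
proof -
  have "le A (imp A y x) (imp A (neg A x) (neg A y))"
    using assms(1-3) imp_eq_one_iff unfolding CoPC_algebra_def by simp
  then show ?thesis
    using assms le_trans[of c "imp A y x" "imp A (neg A x) (neg A y)"] le_imp_mp[of "neg A x" "neg A y" c]
    by simp
qed

lemma CC_lattice_le_neg:
  assumes "CC_lattice A" "x \<in> carrier A" "c \<in> carrier A" and "le A c (imp A x (neg A x))"
  shows "le A c (neg A x)"
proof -
  have "le A (imp A x (neg A x)) (neg A x)" using assms(1,2) imp_eq_one_iff unfolding CC_lattice_def by simp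
  then show ?thesis using assms le_trans[of c "imp A x (neg A x)" "neg A x"] by simp
qed

end

lemma rpc_latticeI:
  assumes closed: "one A \<in> carrier A" "\<And>x. x \<in> carrier A \<Longrightarrow> neg A x \<in> carrier A"
      "\<And>x y. x \<in> carrier A \<Longrightarrow> y \<in> carrier A \<Longrightarrow>
         meet A x y \<in> carrier A \<and> join A x y \<in> carrier A \<and> imp A x y \<in> carrier A"
    and refl: "\<And>x. x \<in> carrier A \<Longrightarrow> le A x x"
    and antisym: "\<And>x y. x \<in> carrier A \<Longrightarrow> y \<in> carrier A \<Longrightarrow> le A x y \<Longrightarrow> le A y x \<Longrightarrow> x = y"
    and trans: "\<And>x y z. x \<in> carrier A \<Longrightarrow> y \<in> carrier A \<Longrightarrow> z \<in> carrier A \<Longrightarrow>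
      le A x y \<Longrightarrow> le A y z \<Longrightarrow> le A x z"
    and meet: "\<And>x y z. x \<in> carrier A \<Longrightarrow> y \<in> carrier A \<Longrightarrow> z \<in> carrier A \<Longrightarrow>
      le A z (meet A x y) \<longleftrightarrow> le A z x \<and> le A z y"
    and join: "\<And>x y z. x \<in> carrier A \<Longrightarrow> y \<in> carrier A \<Longrightarrow> z \<in> carrier A \<Longrightarrow>
      le A (join A x y) z \<longleftrightarrow> le A x z \<and> le A y z"
    and top: "\<And>x. x \<in> carrier A \<Longrightarrow> le A x (one A)"
    and residuation: "\<And>a b c. a \<in> carrier A \<Longrightarrow> b \<in> carrier A \<Longrightarrow> c \<in> carrier A \<Longrightarrow>
      le A c (imp A a b) \<longleftrightarrow> le A (meet A c a) b"
  shows "rpc_lattice A"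
proof -
  have by_lower_bounds: "x = y" if "x \<in> carrier A" "y \<in> carrier A"
    "\<And>z. z \<in> carrier A \<Longrightarrow> le A z x \<longleftrightarrow> le A z y" for x y
    using that refl antisym by blast
  have by_upper_bounds: "x = y" if "x \<in> carrier A" "y \<in> carrier A"
    "\<And>z. z \<in> carrier A \<Longrightarrow> le A x z \<longleftrightarrow> le A y z" for x y
    using that refl antisym by blast
  have meet_lower: "le A (meet A x y) x" "le A (meet A x y) y" if "x \<in> carrier A" "y \<in> carrier A" for x y
    using that closed(3) meet refl by blast+
  have join_upper: "le A x (join A x y)" "le A y (join A x y)" if "x \<in> carrier A" "y \<in> carrier A" for x y
    using that closed(3) join refl by blast+
  show ?thesis
    unfolding rpc_lattice_def
  proof (intro conjI ballI)
    fix x y z assume xyz: "x \<in> carrier A" "y \<in> carrier A" "z \<in> carrier A"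
    show "meet A x (meet A y z) = meet A (meet A x y) z"
      by (rule by_lower_bounds) (use xyz closed meet in auto)
    show "join A x (join A y z) = join A (join A x y) z"
      by (rule by_upper_bounds) (use xyz closed join in auto)
  next
    fix x y assume xy: "x \<in> carrier A" "y \<in> carrier A"
    show "meet A x y = meet A y x"
      by (rule by_lower_bounds) (use xy closed meet in auto)
    show "join A x y = join A y x"
      by (rule by_upper_bounds) (use xy closed join in auto)
    have xy': "meet A x y \<in> carrier A" "join A x y \<in> carrier A" using closed(3)[OF xy] by simp_all
    show "meet A x (join A x y) = x"
    proof (rule by_lower_bounds)
      fix z assume z: "z \<in> carrier A"
      have "le A z x \<Longrightarrow> le A z (join A x y)" using trans[OF z xy(1) xy'(2) _ join_upper(1)[OF xy]] .
      then show "le A z (meet A x (join A x y)) \<longleftrightarrow> le A z x" using meet[OF xy(1) xy'(2) z] by blast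
    qed (use xy xy' closed(3) in blast)+
    show "join A x (meet A x y) = x"
    proof (rule by_upper_bounds)
      fix z assume z: "z \<in> carrier A"
      have "le A x z \<Longrightarrow> le A (meet A x y) z" using trans[OF xy'(1) xy(1) z meet_lower(1)[OF xy]] .
      then show "le A (join A x (meet A x y)) z \<longleftrightarrow> le A x z" using join[OF xy(1) xy'(1) z] by blast
    qed (use xy xy' closed(3) in blast)+
  qed (use closed top residuation in blast)+
qed

lemma variety_N_algebra: "variety S A \<Longrightarrow> N_algebra A"
  by (cases S) (simp_all add: NeF_algebra_def CoPC_algebra_def CC_lattice_def)

lemma variety_NeF_algebra: "variety S A \<Longrightarrow> has_nef S \<Longrightarrow> NeF_algebra A"
  by (cases S) (simp_all add: has_nef_def)

lemma variety_CoPC_algebra: "variety S A \<Longrightarrow> has_copc S \<Longrightarrow> CoPC_algebra A"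
  by (cases S) (simp_all add: has_copc_def CC_lattice_def)

lemma variety_CC_lattice: "variety S A \<Longrightarrow> has_an S \<Longrightarrow> CC_lattice A"
  by (cases S) (simp_all add: has_an_def)

lemma variety_rpc_lattice: "variety S A \<Longrightarrow> rpc_lattice A"
  using variety_N_algebra N_algebra_def by blast

locale nalg_valuation = brouwerian +
  fixes v :: "nat \<Rightarrow> 'a"
  assumes v_closed: "v p \<in> carrier A"
begin

abbreviation val :: "form \<Rightarrow> 'a" where "val \<equiv> eval A v"

lemma val_closed [simp]: "val \<phi> \<in> carrier A"
  by (induction \<phi>) (simp_all add: v_closed)

definition lower_bound :: "'a \<Rightarrow> form multiset \<Rightarrow> bool" where
  "lower_bound c \<Gamma> \<longleftrightarrow> c \<in> carrier A \<and> (\<forall>x \<in># \<Gamma>. le A c (val x))"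

lemma lower_bound_add_mset: "lower_bound c (add_mset a \<Gamma>) \<longleftrightarrow> lower_bound c \<Gamma> \<and> le A c (val a)"
  by (auto simp: lower_bound_def)

lemma lower_bound_meet:
  assumes "lower_bound c \<Gamma>"
  shows "lower_bound (meet A c (val a)) (add_mset a \<Gamma>)"
proof -
  have c: "c \<in> carrier A" using assms by (simp add: lower_bound_def)
  have "le A (meet A c (val a)) (val x)" if "x \<in># \<Gamma>" for x
    using c that le_trans[of "meet A c (val a)" c "val x"] meet_le1[of c "val a"] assms
    by (simp add: lower_bound_def)
  then show ?thesis using c meet_le2[of c "val a"] by (simp add: lower_bound_def)
qed

lemma le_imp_if_lower_bound:
  assumes "\<And>c'. lower_bound c' (add_mset a \<Gamma>) \<Longrightarrow> le A c' (val b)" and "lower_bound c \<Gamma>"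
  shows "le A c (imp A (val a) (val b))"
  using assms(1)[OF lower_bound_meet[OF assms(2)]] assms(2) le_imp_iff by (simp add: lower_bound_def)

lemma derivable_sound:
  assumes "derivable S \<Gamma> \<phi>" and var: "variety S A" and "lower_bound c \<Gamma>"
  shows "le A c (val \<phi>)"
  using assms(1,3)
proof (induction arbitrary: c rule: derivable.induct)
  case (ax p \<Gamma>)
  then show ?case by (simp add: lower_bound_add_mset)
next
  case (top \<Gamma>)
  then show ?case using le_one lower_bound_def by simp
next
  case (impR a \<Gamma> b)
  show ?case using le_imp_if_lower_bound[OF impR.IH impR.prems] by simp
next
  case (impL a b \<Gamma> \<phi>)
  then have "le A c (val b)" using le_imp_mp[of "val a" "val b" c]
    by (simp add: lower_bound_add_mset lower_bound_def)
  then show ?case using impL by (simp add: lower_bound_add_mset)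
next
  case (andR \<Gamma> a b)
  then show ?case using le_meet_iff[of "val a" "val b" c] lower_bound_def by simp
next
  case (andL a b \<Gamma> \<phi>)
  then show ?case using le_meet_iff[of "val a" "val b" c] lower_bound_def by (simp add: lower_bound_add_mset)
next
  case (orR1 \<Gamma> a b)
  then show ?case
    using le_trans[of c "val a" "join A (val a) (val b)"] join_ge1 by (simp add: lower_bound_def)
next
  case (orR2 \<Gamma> b a)
  then show ?case
    using le_trans[of c "val b" "join A (val a) (val b)"] join_ge2 by (simp add: lower_bound_def)
next
  case (orL a \<Gamma> \<phi> b)
  have \<Gamma>: "lower_bound c \<Gamma>" using orL.prems by (simp add: lower_bound_add_mset)
  show ?case using le_by_join_cases[of "val a" "val b" "val \<phi>" c] orL.prems
      le_imp_if_lower_bound[OF orL.IH(1) \<Gamma>] le_imp_if_lower_bound[OF orL.IH(2) \<Gamma>]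
    by (simp add: lower_bound_def)
next
  case (n a b \<Gamma>)
  have "le A c (imp A (val b) (val a))" and "le A c (imp A (val a) (val b))"
    using le_imp_if_lower_bound[of b "add_mset (Neg a) \<Gamma>" a] n.IH(1)
      le_imp_if_lower_bound[of a "add_mset (Neg a) \<Gamma>" b] n.IH(2) n.prems
    by (simp_all add: add_mset_commute)
  then show ?case using N_algebra_le_neg[OF variety_N_algebra[OF var], of "val a" "val b" c] n.prems
    by (simp add: lower_bound_def)
next
  case (nef a \<Gamma> b)
  then show ?case using NeF_algebra_le_neg[OF variety_NeF_algebra[OF var nef.hyps(1)], of "val a" "val b" c]
    by (simp add: lower_bound_def)
next
  case (copc a b \<Gamma>)
  have "le A c (imp A (val b) (val a))"
    using le_imp_if_lower_bound[of b "add_mset (Neg a) \<Gamma>" a] copc.IH copc.prems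
    by (simp add: add_mset_commute)
  then show ?case using CoPC_algebra_le_neg[OF variety_CoPC_algebra[OF var copc.hyps(1)], of "val a" "val b" c] copc.prems
    by (simp add: lower_bound_def)
next
  case (an a \<Gamma>)
  have "le A c (imp A (val a) (neg A (val a)))"
    using le_imp_if_lower_bound[of a \<Gamma> "Neg a"] an.IH an.prems by simp
  then show ?case using CC_lattice_le_neg[OF variety_CC_lattice[OF var an.hyps(1)], of "val a" c] an.prems
    by (simp add: lower_bound_def)
qed

lemma le_conj_list_iff: "c \<in> carrier A \<Longrightarrow> le A c (val (conj_list xs)) \<longleftrightarrow> (\<forall>x \<in> set xs. le A c (val x))"
  by (induction xs rule: conj_list.induct) (simp_all add: le_one le_meet_iff)

end

lemma big_conj_obtain:
  obtains xs where "mset xs = \<Gamma>" and "big_conj \<Gamma> = conj_list xs"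
  unfolding big_conj_def by (metis (mono_tags) ex_mset someI_ex)

theorem soundness: "derivable S \<Gamma> \<phi> \<Longrightarrow> valid TYPE('a) S (Imp (big_conj \<Gamma>) \<phi>)"
  unfolding valid_def
proof (intro allI impI)
  fix A :: "'a nalg" and v :: "nat \<Rightarrow> 'a"
  assume d: "derivable S \<Gamma> \<phi>" and var: "variety S A" and v: "\<forall>p. v p \<in> carrier A"
  interpret nalg_valuation A v
    by unfold_locales (use variety_rpc_lattice[OF var] v in auto)
  obtain xs where xs: "mset xs = \<Gamma>" "big_conj \<Gamma> = conj_list xs" by (rule big_conj_obtain)
  have "lower_bound (val (conj_list xs)) \<Gamma>"
    using le_conj_list_iff[of "val (conj_list xs)" xs] le_refl xs(1) by (auto simp: lower_bound_def)
  then have "le A (val (conj_list xs)) (val \<phi>)" using derivable_sound d var by blast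
  then show "eval A v (Imp (big_conj \<Gamma>) \<phi>) = one A" using imp_eq_one_iff xs(2) by simp
qed

section \<open>The Lindenbaum algebra\<close>

lemma derivable_neg_cong:
  assumes "derivable S (add_mset b \<Gamma>) a" and "derivable S (add_mset a \<Gamma>) b"
  shows "derivable S (add_mset (Neg a) \<Gamma>) (Neg b)"
proof -
  have "derivable S (add_mset (Neg a) (add_mset b \<Gamma>)) a"
    and "derivable S (add_mset (Neg a) (add_mset a \<Gamma>)) b"
    using assms derivable_weaken[of S _ _ "{#Neg a#}"] by simp_all
  moreover have "has_n S \<or> has_copc S" by (cases S) (auto simp: has_n_def has_copc_def)
  ultimately show ?thesis using derivable.n derivable.copc by blast
qed

lemma derivable_identity: "derivable S (add_mset a \<Gamma>) a"
proof (induction a arbitrary: \<Gamma>)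
  case (Var p)
  then show ?case by (rule derivable.ax)
next
  case Top
  then show ?case by (rule derivable.top)
next
  case (And a b)
  have "derivable S (add_mset a (add_mset b \<Gamma>)) a" by (rule And.IH(1))
  moreover have "derivable S (add_mset a (add_mset b \<Gamma>)) b"
    using And.IH(2)[of "add_mset a \<Gamma>"] by (simp add: add_mset_commute)
  ultimately show ?case by (intro derivable.andL derivable.andR)
next
  case (Or a b)
  then show ?case by (intro derivable.orL derivable.orR1 derivable.orR2)
next
  case (Imp a b)
  have "derivable S (add_mset (Imp a b) (add_mset a \<Gamma>)) a" using Imp.IH(1) by (simp add: add_mset_commute)
  moreover have "derivable S (add_mset b (add_mset a \<Gamma>)) b" using Imp.IH(2) .
  ultimately have "derivable S (add_mset (Imp a b) (add_mset a \<Gamma>)) b" by (rule derivable.impL)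
  then show ?case by (intro derivable.impR) (simp add: add_mset_commute)
next
  case (Neg a)
  show ?case using derivable_neg_cong[OF Neg.IH Neg.IH] .
qed

lemma derivable_member: "a \<in># \<Gamma> \<Longrightarrow> derivable S \<Gamma> a"
  by (metis derivable_identity multi_member_split)

definition entails :: "system \<Rightarrow> form \<Rightarrow> form \<Rightarrow> bool" where
  "entails S a b \<longleftrightarrow> derivable S {#a#} b"

definition interderivable :: "system \<Rightarrow> form \<Rightarrow> form \<Rightarrow> bool" where
  "interderivable S a b \<longleftrightarrow> entails S a b \<and> entails S b a"

lemma entails_refl: "entails S a a"
  unfolding entails_def using derivable_identity[of S a "{#}"] by simp

lemma entails_trans: "entails S a b \<Longrightarrow> entails S b c \<Longrightarrow> entails S a c"
  unfolding entails_def using derivable_cut derivable_weaken[of S "{#b#}" c "{#a#}"]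
  by (metis add_mset_add_single add_mset_commute)

lemma entails_And_iff: "entails S c (And a b) \<longleftrightarrow> entails S c a \<and> entails S c b"
proof -
  have "entails S (And a b) a" and "entails S (And a b) b"
    unfolding entails_def using derivable.andL[of S a b "{#}"] derivable_member by simp_all
  then show ?thesis unfolding entails_def using derivable.andR entails_trans[unfolded entails_def] by blast
qed

lemma entails_Or_iff: "entails S (Or a b) c \<longleftrightarrow> entails S a c \<and> entails S b c"
proof -
  have "entails S a (Or a b)" and "entails S b (Or a b)"
    unfolding entails_def using derivable.orR1 derivable.orR2 derivable_member by simp_all
  then show ?thesis unfolding entails_def
    using derivable.orL[of S a "{#}" c b] entails_trans[unfolded entails_def] by auto
qed

lemma entails_Top: "entails S a Top"
  unfolding entails_def by (rule derivable.top)

lemma entails_Imp_iff: "entails S c (Imp a b) \<longleftrightarrow> entails S (And c a) b"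
proof
  assume "entails S c (Imp a b)"
  then have "derivable S {#a, c#} (Imp a b)"
    unfolding entails_def using derivable_weaken[of S "{#c#}" _ "{#a#}"] by (simp add: add_mset_commute)
  moreover have "derivable S (add_mset (Imp a b) {#a, c#}) b"
    using derivable.impL[of S a b "{#a, c#}" b] derivable_member by simp
  ultimately have "derivable S {#c, a#} b" using derivable_cut by (simp add: add_mset_commute)
  then show "entails S (And c a) b" unfolding entails_def using derivable.andL[of S c a "{#}"] by simp
next
  assume "entails S (And c a) b"
  then have "derivable S (add_mset (And c a) {#a, c#}) b"
    unfolding entails_def using derivable_weaken[of S "{#And c a#}" b "{#a, c#}"] by (simp add: add_mset_commute)
  moreover have "derivable S {#a, c#} (And c a)" by (intro derivable.andR derivable_member) simp_all
  ultimately have "derivable S {#a, c#} b" using derivable_cut by blast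
  then show "entails S c (Imp a b)" unfolding entails_def by (intro derivable.impR) simp
qed

lemma entails_Neg: "interderivable S a b \<Longrightarrow> entails S (Neg a) (Neg b)"
  unfolding interderivable_def entails_def using derivable_neg_cong[of S b "{#}" a] by simp

lemma interderivable_equiv:
  "interderivable S a a" "interderivable S a b \<Longrightarrow> interderivable S b a"
  "interderivable S a b \<Longrightarrow> interderivable S b c \<Longrightarrow> interderivable S a c"
  unfolding interderivable_def using entails_refl entails_trans by blast+

lemma entails_And_mono: "entails S a a' \<Longrightarrow> entails S b b' \<Longrightarrow> entails S (And a b) (And a' b')"
  using entails_And_iff entails_refl entails_trans by metis

lemma entails_Or_mono: "entails S a a' \<Longrightarrow> entails S b b' \<Longrightarrow> entails S (Or a b) (Or a' b')"
  using entails_Or_iff entails_refl entails_trans by metis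

lemma entails_Imp_mono: "entails S a' a \<Longrightarrow> entails S b b' \<Longrightarrow> entails S (Imp a b) (Imp a' b')"
proof -
  assume a: "entails S a' a" and b: "entails S b b'"
  have "entails S (And (Imp a b) a) b" using entails_Imp_iff entails_refl by blast
  then have "entails S (And (Imp a b) a') b'"
    using entails_And_mono[OF entails_refl a] b entails_trans by blast
  then show ?thesis using entails_Imp_iff by blast
qed

lemma interderivable_cong:
  assumes "interderivable S a a'" and "interderivable S b b'"
  shows "interderivable S (And a b) (And a' b')" and "interderivable S (Or a b) (Or a' b')"
    and "interderivable S (Imp a b) (Imp a' b')"
  using assms entails_And_mono entails_Or_mono entails_Imp_mono unfolding interderivable_def by blast+

lemma interderivable_Neg_cong: "interderivable S a a' \<Longrightarrow> interderivable S (Neg a) (Neg a')"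
  using entails_Neg interderivable_equiv(2) unfolding interderivable_def by blast

instance form :: countable by countable_datatype

(* Equivalence classes are coded as sets of naturals, the carrier type of the completeness half. *)
definition eq_class :: "system \<Rightarrow> form \<Rightarrow> nat set" where
  "eq_class S a = to_nat ` {b. interderivable S a b}"

lemma eq_class_eq_iff: "eq_class S a = eq_class S b \<longleftrightarrow> interderivable S a b"
proof -
  have "eq_class S a = eq_class S b \<longleftrightarrow> {c. interderivable S a c} = {c. interderivable S b c}"
    unfolding eq_class_def by (simp add: inj_image_eq_iff)
  also have "\<dots> \<longleftrightarrow> interderivable S a b" using interderivable_equiv by blast
  finally show ?thesis .
qed

definition class_rep :: "system \<Rightarrow> nat set \<Rightarrow> form" where
  "class_rep S x = (SOME a. eq_class S a = x)"

lemma interderivable_class_rep: "interderivable S (class_rep S (eq_class S a)) a"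
  unfolding class_rep_def by (metis (mono_tags) eq_class_eq_iff someI)

definition lindenbaum :: "system \<Rightarrow> nat set nalg" where
  "lindenbaum S =
     \<lparr>carrier = range (eq_class S),
      meet = \<lambda>x y. eq_class S (And (class_rep S x) (class_rep S y)),
      join = \<lambda>x y. eq_class S (Or (class_rep S x) (class_rep S y)),
      imp = \<lambda>x y. eq_class S (Imp (class_rep S x) (class_rep S y)),
      one = eq_class S Top,
      neg = \<lambda>x. eq_class S (Neg (class_rep S x))\<rparr>"

lemma lindenbaum_simps:
  "carrier (lindenbaum S) = range (eq_class S)"
  "one (lindenbaum S) = eq_class S Top"
  "meet (lindenbaum S) (eq_class S a) (eq_class S b) = eq_class S (And a b)"
  "join (lindenbaum S) (eq_class S a) (eq_class S b) = eq_class S (Or a b)"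
  "imp (lindenbaum S) (eq_class S a) (eq_class S b) = eq_class S (Imp a b)"
  "neg (lindenbaum S) (eq_class S a) = eq_class S (Neg a)"
  unfolding lindenbaum_def
  by (simp_all add: eq_class_eq_iff interderivable_cong interderivable_Neg_cong interderivable_class_rep)

lemma lindenbaum_le: "le (lindenbaum S) (eq_class S a) (eq_class S b) \<longleftrightarrow> entails S a b"
  unfolding le_def lindenbaum_simps eq_class_eq_iff interderivable_def
  using entails_And_iff entails_refl by blast

lemma lindenbaum_rpc_lattice: "rpc_lattice (lindenbaum S)"
proof (rule rpc_latticeI)
  fix x y assume "x \<in> carrier (lindenbaum S)" "y \<in> carrier (lindenbaum S)"
    and le: "le (lindenbaum S) x y" "le (lindenbaum S) y x"
  then obtain a b where "x = eq_class S a" "y = eq_class S b" by (auto simp: lindenbaum_simps)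
  with le show "x = y" by (simp add: lindenbaum_le eq_class_eq_iff interderivable_def)
qed (auto simp: lindenbaum_simps lindenbaum_le entails_refl entails_And_iff entails_Or_iff entails_Top
    entails_Imp_iff intro: entails_trans)

lemma eval_lindenbaum: "eval (lindenbaum S) (\<lambda>p. eq_class S (Var p)) \<phi> = eq_class S \<phi>"
  by (induction \<phi>) (simp_all add: lindenbaum_simps)

lemma lindenbaum_eq_one_iff: "eq_class S \<phi> = one (lindenbaum S) \<longleftrightarrow> derivable S {#} \<phi>"
proof -
  have "eq_class S \<phi> = one (lindenbaum S) \<longleftrightarrow> derivable S {#Top#} \<phi>"
    by (simp add: lindenbaum_simps eq_class_eq_iff interderivable_def entails_def derivable.top)
  also have "\<dots> \<longleftrightarrow> derivable S {#} \<phi>"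
    using derivable_cut[OF derivable.top[of S "{#}"]] derivable_weaken[of S "{#}" \<phi> "{#Top#}"] by auto
  finally show ?thesis .
qed

lemma derivable_impL_member:
  "Imp a b \<in># \<Gamma> \<Longrightarrow> derivable S \<Gamma> a \<Longrightarrow> derivable S (add_mset b (\<Gamma> - {#Imp a b#})) \<phi>
    \<Longrightarrow> derivable S \<Gamma> \<phi>"
  by (metis derivable.impL insert_DiffM)

lemma derivable_N_axiom: "derivable S {#} (Imp (Iff a b) (Iff (Neg a) (Neg b)))"
proof -
  let ?\<Gamma> = "{#Imp a b, Imp b a#}"
  have ba: "derivable S (add_mset b ?\<Gamma>) a"
    by (rule derivable_impL_member[of b a]) (simp_all add: derivable_member)
  have ab: "derivable S (add_mset a ?\<Gamma>) b"
    by (rule derivable_impL_member[of a b]) (simp_all add: derivable_member)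
  have "derivable S ?\<Gamma> (Imp (Neg a) (Neg b))" and "derivable S ?\<Gamma> (Imp (Neg b) (Neg a))"
    using derivable_neg_cong[OF ba ab] derivable_neg_cong[OF ab ba] by (auto intro: derivable.impR)
  then have "derivable S {#Iff a b#} (Iff (Neg a) (Neg b))"
    unfolding Iff_def using derivable.andL[of S "Imp a b" "Imp b a" "{#}"] derivable.andR by simp
  then show ?thesis by (intro derivable.impR) simp
qed

lemma derivable_NeF_axiom: "has_nef S \<Longrightarrow> derivable S {#} (Imp (And p (Neg p)) (Neg q))"
proof -
  assume "has_nef S"
  moreover have "derivable S (add_mset (Neg p) {#p#}) p" by (rule derivable_member) simp
  ultimately have "derivable S {#Neg p, p#} (Neg q)" by (rule derivable.nef)
  then show ?thesis using derivable.andL[of S p "Neg p" "{#}"] by (intro derivable.impR) (simp add: add_mset_commute)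
qed

lemma derivable_CoPC_axiom: "has_copc S \<Longrightarrow> derivable S {#} (Imp (Imp p q) (Imp (Neg q) (Neg p)))"
proof -
  assume "has_copc S"
  moreover have "derivable S (add_mset (Neg q) (add_mset p {#Imp p q#})) q"
    by (rule derivable_impL_member[of p q]) (simp_all add: derivable_member)
  ultimately have "derivable S (add_mset (Neg q) {#Imp p q#}) (Neg p)" by (rule derivable.copc)
  then show ?thesis by (intro derivable.impR) simp
qed

lemma derivable_CC_axiom: "has_an S \<Longrightarrow> derivable S {#} (Imp (Imp p (Neg p)) (Neg p))"
proof -
  assume "has_an S"
  moreover have "derivable S (add_mset p {#Imp p (Neg p)#}) (Neg p)"
    by (rule derivable_impL_member[of p "Neg p"]) (simp_all add: derivable_member)
  ultimately have "derivable S {#Imp p (Neg p)#} (Neg p)" by (rule derivable.an)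
  then show ?thesis by (intro derivable.impR) simp
qed

lemma lindenbaum_variety: "variety S (lindenbaum S)"
proof -
  have N: "N_algebra (lindenbaum S)"
    unfolding N_algebra_def using lindenbaum_rpc_lattice derivable_N_axiom
    by (auto simp: lindenbaum_simps iffA_def Iff_def lindenbaum_eq_one_iff[symmetric])
  show ?thesis
  proof (cases S)
    case G3NeF
    then show ?thesis using N derivable_NeF_axiom
      by (auto simp: NeF_algebra_def has_nef_def lindenbaum_simps lindenbaum_eq_one_iff[symmetric])
  next
    case G3CoPC
    then show ?thesis using N derivable_CoPC_axiom
      by (auto simp: CoPC_algebra_def has_copc_def lindenbaum_simps lindenbaum_eq_one_iff[symmetric])
  next
    case G3MPC
    then show ?thesis using N derivable_CoPC_axiom derivable_CC_axiom
      by (auto simp: CC_lattice_def CoPC_algebra_def has_copc_def has_an_def lindenbaum_simps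
          lindenbaum_eq_one_iff[symmetric])
  qed (use N in simp)
qed

lemma derivable_conj_list: "derivable S (mset xs) (conj_list xs)"
proof (induction xs rule: conj_list.induct)
  case 1
  then show ?case by (simp add: derivable.top)
next
  case (2 a)
  then show ?case by (simp add: derivable_member)
next
  case (3 a b xs)
  have "derivable S (add_mset a (mset (b # xs))) a" by (rule derivable_member) simp
  moreover have "derivable S (add_mset a (mset (b # xs))) (conj_list (b # xs))"
    using derivable_weaken[OF 3, of "{#a#}"] by (simp add: add_mset_commute)
  ultimately show ?case by (simp add: derivable.andR)
qed

lemma derivable_of_big_conj_imp: "derivable S {#} (Imp (big_conj \<Gamma>) \<phi>) \<Longrightarrow> derivable S \<Gamma> \<phi>"
proof -
  assume imp: "derivable S {#} (Imp (big_conj \<Gamma>) \<phi>)"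
  obtain xs where "mset xs = \<Gamma>" and "big_conj \<Gamma> = conj_list xs" by (rule big_conj_obtain)
  then have "derivable S (add_mset (Imp (big_conj \<Gamma>) \<phi>) \<Gamma>) (big_conj \<Gamma>)"
    using derivable_conj_list derivable_weaken[of S \<Gamma> _ "{#_#}"] by fastforce
  then have "derivable S (add_mset (Imp (big_conj \<Gamma>) \<phi>) \<Gamma>) \<phi>"
    using derivable.impL derivable_identity by blast
  moreover have "derivable S \<Gamma> (Imp (big_conj \<Gamma>) \<phi>)" using derivable_weaken[OF imp] by simp
  ultimately show ?thesis using derivable_cut by blast
qed

theorem completeness: "valid TYPE(nat set) S (Imp (big_conj \<Gamma>) \<phi>) \<Longrightarrow> derivable S \<Gamma> \<phi>"
proof -
  assume "valid TYPE(nat set) S (Imp (big_conj \<Gamma>) \<phi>)"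
  then have "eval (lindenbaum S) (\<lambda>p. eq_class S (Var p)) (Imp (big_conj \<Gamma>) \<phi>) = one (lindenbaum S)"
    using lindenbaum_variety unfolding valid_def by (simp add: lindenbaum_simps)
  then show ?thesis by (simp only: eval_lindenbaum lindenbaum_eq_one_iff derivable_of_big_conj_imp)
qed

theorem theorem3p3:
  fixes S :: system and \<Gamma> :: "form multiset" and \<phi> :: form
  shows "(derivable S \<Gamma> \<phi> \<longrightarrow> valid TYPE('a) S (Imp (big_conj \<Gamma>) \<phi>))
       \<and> (valid TYPE(nat set) S (Imp (big_conj \<Gamma>) \<phi>) \<longrightarrow> derivable S \<Gamma> \<phi>)"
  using soundness completeness by blast

end
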